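(* Let $Y_1,\dots,Y_n$ be independent with $Y_i\sim\mathcal N(\mu_i,\sigma^2)$, known $\sigma>0$, and $\mu_1\le\dots\le\mu_n$. Let $1-\alpha\in(0,1)$, $\mathcal J^{full}=\{(j,k)\in\{1,\dots,n\}^2:j\le k\}$ and $\delta=\alpha/(2|\mathcal J^{full}|)=\alpha/(n^2+n)$. Define $$L^\alpha_{\mathbf Y,i}=\sup_{(j,k)\in\mathcal J^{full}:\mu_i\ge\mu_k}\Big(Z_{j:k}-\frac{\sigma\,\Phi^{-1}(1-\delta)}{\sqrt{k-j+1}}\Big),\quad U^\alpha_{\mathbf Y,i}=\inf_{(j,k)\in\mathcal J^{full}:\mu_i\le\mu_j}\Big(Z_{j:k}-\frac{\sigma\,\Phi^{-1}(\delta)}{\sqrt{k-j+1}}\Big),$$ with $Z_{j:k}=\frac1{k-j+1}\sum_{i=j}^kY_i$, and the Yang--Barber bounds $$L^{\alpha,YB}_{\mathbf Y,i}=\sup_{(j,k)\in\mathcal J^{full}:\mu_i\ge\mu_k}\Big(Z^{Iso}_{j:k}-\frac{\sqrt{2\sigma^2\log(1/\delta)}}{\sqrt{k-j+1}}\Big),\quad U^{\alpha,YB}_{\mathbf Y,i}=\inf_{(j,k)\in\mathcal J^{full}:\mu_i\le\mu_j}\Big(Z^{Iso}_{j:k}+\frac{\sqrt{2\sigma^2\log(1/\delta)}}{\sqrt{k-j+1}}\Big),$$ with $Z^{Iso}_{j:k}=\frac1{k-j+1}\sum_{i=j}^k\widehat\mu^{Iso}_i$. Then $L^\alpha_{\mathbf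 Y,i}\ge L^{\alpha,YB}_{\mathbf Y,i}$ and $U^\alpha_{\mathbf Y,i}\le U^{\alpha,YB}_{\mathbf Y,i}$ for all $1\le i\le n$.
   Context: $\Phi^{-1}(\delta)$ is the $\delta$-quantile of the standard normal distribution. $\widehat{\boldsymbol\mu}^{Iso}=(\widehat\mu^{Iso}_1,\dots,\widehat\mu^{Iso}_n)$ is the (unweighted) isotonic regression of $\mathbf Y$: the minimizer of $\sum_{i=1}^n(Y_i-m_i)^2$ over $\mathbf m\in\mathbb R^n$ with $m_1\le\dots\le m_n$. (The bounds $L^\alpha,U^\alpha$ are those of the paper's normal-case calibration band with volumes $v_i=1$ and dispersion $\varphi=\sigma^2$.) *)

theory Defs
  imports "HOL-Probability.Probability"
begin

definition std_normal_cdf :: "real \<Rightarrow> real" where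
  "std_normal_cdf x = (LBINT t:{..x}. std_normal_density t)"

definition std_normal_quantile :: "real \<Rightarrow> real" where
  "std_normal_quantile d = Inf {x. d \<le> std_normal_cdf x}"

text \<open>Vectors are functions on indices 1..n. Nondecreasing on 1..n.\<close>
definition nondecr :: "nat \<Rightarrow> (nat \<Rightarrow> real) \<Rightarrow> bool" where
  "nondecr n m \<longleftrightarrow> (\<forall>i j. 1 \<le> i \<longrightarrow> i \<le> j \<longrightarrow> j \<le> n \<longrightarrow> m i \<le> m j)"

text \<open>m is the (unweighted) isotonic regression of Y: a minimiser of the
  squared error over nondecreasing vectors (this minimiser exists and is unique).\<close>
definition is_iso_reg :: "nat \<Rightarrow> (nat \<Rightarrow> real) \<Rightarrow> (nat \<Rightarrow> real) \<Rightarrow> bool" where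
  "is_iso_reg n Y m \<longleftrightarrow> nondecr n m \<and>
     (\<forall>m'. nondecr n m' \<longrightarrow> (\<Sum>i=1..n. (Y i - m i)^2) \<le> (\<Sum>i=1..n. (Y i - m' i)^2))"

definition Jfull :: "nat \<Rightarrow> (nat \<times> nat) set" where
  "Jfull n = {(j,k). 1 \<le> j \<and> j \<le> k \<and> k \<le> n}"

definition blockavg :: "(nat \<Rightarrow> real) \<Rightarrow> nat \<Rightarrow> nat \<Rightarrow> real" where
  "blockavg Y j k = (\<Sum>l=j..k. Y l) / real (k - j + 1)"

end

theory Submission
  imports Defs "HOL-Real_Asymp.Real_Asymp"
begin

(* The isotonic fit m is a step function, and perturbing it by +-e on a window shows:
   on a window [j..k0] ending at a jump of m (or at n) the data average at most m, and
   on a window [j0..k] starting at a jump of m (or at 1) the data average at least m.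
   Fix j and view the penalized average of m over [j..k] as a function of the length r.
   While k stays in a run where m equals v, it is v - D t^2 + C t with t = 1/sqrt r and
   D >= 0 (the earlier values of m are at most v), a concave function of t; so it does
   not increase when k is moved to the end of its run or to the end of the previous run,
   both jumps of m. Hence every term of the Yang-Barber infimum dominates a term of the
   Gaussian one, once the Mills ratio bound gives -Phi^-1(delta) <= sqrt (2 ln (1/delta)).
   The supremum is the mirror image. *)

section \<open>Gaussian tail bounds\<close>

lemma has_bochner_integral_std_normal_first_moment_tail:
  fixes a :: real
  assumes "0 \<le> a"
  shows "has_bochner_integral lborel
           (\<lambda>s. indicator {a..} s *\<^sub>R (s * std_normal_density s)) (std_normal_density a)"
proof (rule has_bochner_integral_nn_integral)
  have "((\<lambda>s. - std_normal_density s) \<longlongrightarrow> 0) at_top"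
    unfolding std_normal_density_def by real_asymp
  then have "(\<integral>\<^sup>+s. ennreal (s * std_normal_density s) * indicator {a..} s \<partial>lborel)
      = ennreal (0 - - std_normal_density a)"
    using assms unfolding std_normal_density_def
    by (intro nn_integral_FTC_atLeast)
      (auto intro!: derivative_eq_intros simp: field_simps power2_eq_square)
  moreover have "(\<integral>\<^sup>+s. ennreal (indicator {a..} s *\<^sub>R (s * std_normal_density s)) \<partial>lborel)
      = (\<integral>\<^sup>+s. ennreal (s * std_normal_density s) * indicator {a..} s \<partial>lborel)"
    by (intro nn_integral_cong) (simp split: split_indicator)
  ultimately show "(\<integral>\<^sup>+s. ennreal (indicator {a..} s *\<^sub>R (s * std_normal_density s)) \<partial>lborel)
      = ennreal (std_normal_density a)"
    by simp
qed (use assms in \<open>auto split: split_indicator\<close>)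

lemma std_normal_upper_tail_le:
  fixes a :: real
  assumes "0 < a"
  shows "(LBINT s:{a..}. std_normal_density s) \<le> std_normal_density a / a"
proof -
  note moment = has_bochner_integral_std_normal_first_moment_tail[OF less_imp_le[OF assms]]
  have "(LBINT s:{a..}. std_normal_density s)
      \<le> (\<integral>s. indicator {a..} s *\<^sub>R (s * std_normal_density s) / a \<partial>lborel)"
    unfolding set_lebesgue_integral_def
  proof (rule integral_mono)
    show "integrable lborel (\<lambda>s. indicator {a..} s *\<^sub>R (s * std_normal_density s) / a)"
      using moment by (auto simp: has_bochner_integral_iff)
  qed (use assms in \<open>auto split: split_indicator simp: field_simps
      intro: mult_right_mono intro!: integrable_real_mult_indicator\<close>)
  also have "\<dots> = std_normal_density a / a"
    using moment by (simp add: has_bochner_integral_integral_eq)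
  finally show ?thesis .
qed

lemma std_normal_cdf_le_mills:
  fixes x :: real
  assumes "x < 0"
  shows "std_normal_cdf x \<le> std_normal_density x / - x"
proof -
  have "std_normal_cdf x = (LBINT s:{-x..}. std_normal_density s)"
    unfolding std_normal_cdf_def set_lebesgue_integral_def
    using lborel_integral_real_affine[where c = "-1" and t = 0
        and f = "\<lambda>s. indicator {..x} s *\<^sub>R std_normal_density s"]
    by (simp add: std_normal_density_def indicator_def minus_le_iff)
  also have "\<dots> \<le> std_normal_density (-x) / - x"
    using assms by (intro std_normal_upper_tail_le) simp
  finally show ?thesis
    by (simp add: std_normal_density_def)
qed

lemma std_normal_cdf_ge_mills:
  fixes t :: real
  assumes "0 < t"
  shows "1 - std_normal_density t / t \<le> std_normal_cdf t"
proof -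
  have "{..t} \<union> {t<..} = UNIV"
    by auto
  then have "1 = (LBINT s:{..t} \<union> {t<..}. std_normal_density s)"
    by (simp add: set_lebesgue_integral_def)
  also have "\<dots> = std_normal_cdf t + (LBINT s:{t<..}. std_normal_density s)"
    unfolding std_normal_cdf_def
    by (intro set_integral_Un integrable_mult_indicator[folded set_integrable_def]) auto
  also have "(LBINT s:{t<..}. std_normal_density s) \<le> (LBINT s:{t..}. std_normal_density s)"
    unfolding set_lebesgue_integral_def
    by (intro integral_mono integrable_mult_indicator) (auto split: split_indicator)
  also have "\<dots> \<le> std_normal_density t / t"
    using assms by (rule std_normal_upper_tail_le)
  finally show ?thesis
    by simp
qed

lemma std_normal_cdf_sqrt_log_bounds:
  fixes d :: real
  assumes d: "0 < d" "d < 1/2"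
  defines "t \<equiv> sqrt (2 * ln (1 / d))"
  shows "1 - d \<le> std_normal_cdf t"
    and "x < - t \<Longrightarrow> std_normal_cdf x < d"
proof -
  have "ln 2 < ln (1 / d)"
    using d by (simp add: field_simps)
  then have "1 < 2 * ln (1 / d)"
    using ln2_ge_two_thirds by linarith
  then have t: "1 < t" "t\<^sup>2 = 2 * ln (1 / d)"
    unfolding t_def by (auto simp: real_less_rsqrt)
  have "1 < sqrt (2 * pi)"
    using pi_gt3 by (simp add: real_less_rsqrt)
  have density_lt: "std_normal_density y < d" if "t \<le> \<bar>y\<bar>" for y
  proof -
    have "t\<^sup>2 \<le> y\<^sup>2"
      using that t(1) by (metis abs_le_square_iff abs_of_pos less_trans zero_less_one)
    then have "exp (- y\<^sup>2 / 2) \<le> exp (- t\<^sup>2 / 2)"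
      by simp
    also have "exp (- t\<^sup>2 / 2) = d"
      using d by (simp add: t(2) exp_minus)
    also have "d < d * sqrt (2 * pi)"
      using \<open>1 < sqrt (2 * pi)\<close> d by simp
    finally show ?thesis
      by (simp add: std_normal_density_def field_simps)
  qed
  have "std_normal_density t / t \<le> std_normal_density t"
    using divide_left_mono[of 1 t "std_normal_density t"] t(1) by simp
  with std_normal_cdf_ge_mills[of t] density_lt[of t] t(1) show "1 - d \<le> std_normal_cdf t"
    by simp
  assume "x < - t"
  then have "std_normal_cdf x \<le> std_normal_density x / - x"
    using t(1) by (intro std_normal_cdf_le_mills) simp
  also have "\<dots> \<le> std_normal_density x"
    using divide_left_mono[of 1 "- x" "std_normal_density x"] \<open>x < - t\<close> t(1) by simp
  also have "\<dots> < d"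
    using \<open>x < - t\<close> by (intro density_lt) simp
  finally show "std_normal_cdf x < d" .
qed

lemma std_normal_quantile_bounds:
  fixes d :: real
  assumes d: "0 < d" "d < 1/2"
  shows "std_normal_quantile (1 - d) \<le> sqrt (2 * ln (1 / d))"
    and "- sqrt (2 * ln (1 / d)) \<le> std_normal_quantile d"
proof -
  define t where "t = sqrt (2 * ln (1 / d))"
  note cdf = std_normal_cdf_sqrt_log_bounds[OF d, folded t_def]
  have lower: "- t \<le> x" if "d \<le> std_normal_cdf x" for x
    using cdf(2)[of x] that by linarith
  show "std_normal_quantile (1 - d) \<le> t"
    unfolding std_normal_quantile_def
  proof (rule cInf_lower)
    show "bdd_below {x. 1 - d \<le> std_normal_cdf x}"
      using d by (intro bdd_belowI[of _ "- t"] lower) auto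
  qed (use cdf(1) in simp)
  show "- t \<le> std_normal_quantile d"
    unfolding std_normal_quantile_def
  proof (rule cInf_greatest)
    show "{x. d \<le> std_normal_cdf x} \<noteq> {}"
      using cdf(1) d by (auto intro!: exI[of _ t])
  qed (use lower in simp)
qed

section \<open>First-order conditions for isotonic regression\<close>

lemma nondecrD:
  "nondecr n m \<Longrightarrow> 1 \<le> i \<Longrightarrow> i \<le> j \<Longrightarrow> j \<le> n \<Longrightarrow> m i \<le> m j"
  unfolding nondecr_def by blast

lemma nondecr_add_on_interval:
  assumes mono: "nondecr n m"
    and left: "1 < j \<Longrightarrow> m (j - 1) \<le> m j + e"
    and right: "k < n \<Longrightarrow> m k + e \<le> m (k + 1)"
  shows "nondecr n (\<lambda>l. if j \<le> l \<and> l \<le> k then m l + e else m l)"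
  unfolding nondecr_def
proof (intro allI impI)
  fix a b assume ab: "1 \<le> a" "a \<le> b" "b \<le> n"
  consider "j \<le> a \<and> a \<le> k \<longleftrightarrow> j \<le> b \<and> b \<le> k" | "a < j" "j \<le> b" "b \<le> k" | "j \<le> a" "a \<le> k" "k < b"
    using ab by linarith
  then show "(if j \<le> a \<and> a \<le> k then m a + e else m a) \<le> (if j \<le> b \<and> b \<le> k then m b + e else m b)"
  proof cases
    case 1
    then show ?thesis
      using nondecrD[OF mono ab] by auto
  next
    case 2
    then have "m a \<le> m (j - 1)" "m j \<le> m b" "1 < j"
      using ab by (auto intro!: nondecrD[OF mono])
    then show ?thesis
      using 2 left by auto
  next
    case 3
    then have "m a \<le> m k" "m (k + 1) \<le> m b" "k < n"
      using ab by (auto intro!: nondecrD[OF mono])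
    then show ?thesis
      using 3 right by auto
  qed
qed

lemma iso_reg_interval_shift_ineq:
  assumes iso: "is_iso_reg n Y m" and jk: "1 \<le> j" "j \<le> k" "k \<le> n"
    and shifted: "nondecr n (\<lambda>l. if j \<le> l \<and> l \<le> k then m l + e else m l)"
  shows "0 \<le> e * (2 * (\<Sum>l=j..k. m l - Y l)) + e\<^sup>2 * real (k - j + 1)"
proof -
  let ?m' = "\<lambda>l. if j \<le> l \<and> l \<le> k then m l + e else m l"
  have "0 \<le> (\<Sum>l=1..n. (Y l - ?m' l)\<^sup>2 - (Y l - m l)\<^sup>2)"
    using iso shifted unfolding is_iso_reg_def by (simp add: sum_subtractf)
  also have "\<dots> = (\<Sum>l\<in>{j..k}. (Y l - m l - e)\<^sup>2 - (Y l - m l)\<^sup>2)"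
    using jk by (intro sum.mono_neutral_cong_right) (auto simp: diff_diff_eq)
  also have "\<dots> = (\<Sum>l=j..k. e * (2 * (m l - Y l)) + e\<^sup>2)"
    by (intro sum.cong) (simp_all add: power2_eq_square algebra_simps)
  also have "\<dots> = e * (2 * (\<Sum>l=j..k. m l - Y l)) + e\<^sup>2 * real (k - j + 1)"
    using jk by (simp add: sum.distrib sum_subtractf right_diff_distrib Suc_diff_le flip: sum_distrib_left)
  finally show ?thesis .
qed

lemma nonneg_if_small_perturbations_nonneg:
  fixes a b e0 :: real
  assumes "0 < e0" and perturb: "\<And>e. 0 < e \<Longrightarrow> e \<le> e0 \<Longrightarrow> 0 \<le> e * a + e\<^sup>2 * b"
  shows "0 \<le> a"
proof (rule tendsto_lowerbound)
  show "((\<lambda>e. a + e * b) \<longlongrightarrow> a) (at_right 0)"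
    by (auto intro!: tendsto_eq_intros)
  have "\<forall>\<^sub>F e in at_right 0. 0 < e \<and> e \<le> e0"
    using assms(1) by (auto simp: eventually_at_right_field intro: exI[of _ e0])
  then show "\<forall>\<^sub>F e in at_right 0. 0 \<le> a + e * b"
  proof (rule eventually_mono)
    fix e :: real assume e: "0 < e \<and> e \<le> e0"
    then have "0 \<le> e * (a + e * b)"
      using perturb[of e] by (simp add: power2_eq_square algebra_simps)
    then show "0 \<le> a + e * b"
      using e by (simp add: zero_le_mult_iff)
  qed
qed simp

lemma iso_reg_blockavg_le_from_block_start:
  assumes iso: "is_iso_reg n Y m" and jk: "1 \<le> j" "j \<le> k" "k \<le> n"
    and start: "j = 1 \<or> m (j - 1) < m j"
  shows "blockavg m j k \<le> blockavg Y j k"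
proof -
  have mono: "nondecr n m"
    using iso unfolding is_iso_reg_def by blast
  define e0 where "e0 = (if j = 1 then 1 else m j - m (j - 1))"
  have "0 < e0"
    using start by (auto simp: e0_def)
  then have "0 \<le> - 2 * (\<Sum>l=j..k. m l - Y l)"
  proof (rule nonneg_if_small_perturbations_nonneg)
    fix e :: real assume e: "0 < e" "e \<le> e0"
    have "m (j - 1) \<le> m j + - e" if "1 < j"
      using e that by (simp add: e0_def)
    moreover have "m k + - e \<le> m (k + 1)" if "k < n"
      using e that jk nondecrD[OF mono, of k "k + 1"] by simp
    ultimately have "nondecr n (\<lambda>l. if j \<le> l \<and> l \<le> k then m l + - e else m l)"
      by (rule nondecr_add_on_interval[OF mono])
    from iso_reg_interval_shift_ineq[OF iso jk this]
    show "0 \<le> e * (- 2 * (\<Sum>l=j..k. m l - Y l)) + e\<^sup>2 * real (k - j + 1)"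
      by simp
  qed
  then have "(\<Sum>l=j..k. m l) \<le> (\<Sum>l=j..k. Y l)"
    by (simp add: sum_subtractf)
  then show ?thesis
    unfolding blockavg_def by (simp add: divide_right_mono)
qed

lemma iso_reg_blockavg_ge_to_block_end:
  assumes iso: "is_iso_reg n Y m" and jk: "1 \<le> j" "j \<le> k" "k \<le> n"
    and "end": "k = n \<or> m k < m (k + 1)"
  shows "blockavg Y j k \<le> blockavg m j k"
proof -
  have mono: "nondecr n m"
    using iso unfolding is_iso_reg_def by blast
  define e0 where "e0 = (if k = n then 1 else m (k + 1) - m k)"
  have "0 < e0"
    using "end" by (auto simp: e0_def)
  then have "0 \<le> 2 * (\<Sum>l=j..k. m l - Y l)"
  proof (rule nonneg_if_small_perturbations_nonneg)
    fix e :: real assume e: "0 < e" "e \<le> e0"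
    have "m (j - 1) \<le> m j + e" if "1 < j"
      using e that jk nondecrD[OF mono, of "j - 1" j] by fastforce
    moreover have "m k + e \<le> m (k + 1)" if "k < n"
      using e that by (simp add: e0_def)
    ultimately have "nondecr n (\<lambda>l. if j \<le> l \<and> l \<le> k then m l + e else m l)"
      by (rule nondecr_add_on_interval[OF mono])
    from iso_reg_interval_shift_ineq[OF iso jk this]
    show "0 \<le> e * (2 * (\<Sum>l=j..k. m l - Y l)) + e\<^sup>2 * real (k - j + 1)" .
  qed
  then have "(\<Sum>l=j..k. Y l) \<le> (\<Sum>l=j..k. m l)"
    by (simp add: sum_subtractf)
  then show ?thesis
    unfolding blockavg_def by (simp add: divide_right_mono)
qed

section \<open>Penalized block averages\<close>

lemma convex_on_quadratic:
  fixes C D :: real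
  assumes "0 \<le> D"
  shows "convex_on {a..b} (\<lambda>t. D * t\<^sup>2 - C * t)"
proof -
  have "convex_on {a..b} (\<lambda>t. D * t\<^sup>2)"
    using convex_on_subset[OF convex_power2] assms by (intro convex_on_cmul) auto
  moreover have "convex_on {a..b} (\<lambda>t. - C * t)"
    by (auto simp: convex_on_def algebra_simps)
  ultimately show ?thesis
    using convex_on_add by fastforce
qed

lemma penalized_avg_min_at_run_ends:
  fixes C D v :: real and lo s hi :: nat
  assumes "0 \<le> D" "0 < lo" "lo \<le> s" "s \<le> hi"
  shows "min (v - D / real lo + C / sqrt (real lo)) (v - D / real hi + C / sqrt (real hi))
           \<le> v - D / real s + C / sqrt (real s)"
proof -
  define t where "t r = 1 / sqrt (real r)" for r :: nat
  have penalty: "D / real r - C / sqrt (real r) = D * (t r)\<^sup>2 - C * t r" for r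
    by (simp add: t_def power_divide)
  have "t hi \<le> t s" "t s \<le> t lo"
    using assms unfolding t_def by (simp_all add: divide_left_mono)
  then have "D * (t s)\<^sup>2 - C * t s \<le> max (D * (t hi)\<^sup>2 - C * t hi) (D * (t lo)\<^sup>2 - C * t lo)"
    by (intro convex_on_le_max convex_on_quadratic \<open>0 \<le> D\<close>) simp
  then show ?thesis
    using penalty[of lo] penalty[of s] penalty[of hi] by (auto simp: min_def max_def)
qed

lemma nondecr_maximal_constant_run:
  assumes mono: "nondecr N m" and s: "1 \<le> s" "s \<le> N"
  obtains lo hi where "lo < s" "s \<le> hi" "hi \<le> N"
    and "\<And>r. lo < r \<Longrightarrow> r \<le> hi \<Longrightarrow> m r = m s"
    and "hi = N \<or> m hi < m (hi + 1)"
    and "1 \<le> lo \<Longrightarrow> m lo < m (lo + 1)"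
proof -
  define I where "I = {r \<in> {1..N}. m r = m s}"
  have I: "finite I" "s \<in> I"
    using s by (auto simp: I_def)
  have in_I: "1 \<le> r" "r \<le> N" "m r = m s" if "r \<in> I" for r
    using that by (auto simp: I_def)
  have lo: "Min I \<in> I" "Min I \<le> s" "\<And>r. r \<in> I \<Longrightarrow> Min I \<le> r"
    using I by (auto intro: Min_in)
  have hi: "Max I \<in> I" "s \<le> Max I" "\<And>r. r \<in> I \<Longrightarrow> r \<le> Max I"
    using I by (auto intro: Max_in)
  note lo_I = in_I[OF lo(1)] and hi_I = in_I[OF hi(1)]
  show ?thesis
  proof
    show "Min I - 1 < s" "s \<le> Max I" "Max I \<le> N"
      using lo(2) hi(2) lo_I(1) hi_I(2) by linarith+
    show "m r = m s" if "Min I - 1 < r" "r \<le> Max I" for r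
    proof -
      have "m (Min I) \<le> m r"
        using lo_I(1) that hi_I(2) by (intro nondecrD[OF mono]) linarith+
      moreover have "m r \<le> m (Max I)"
        using lo_I(1) that hi_I(2) by (intro nondecrD[OF mono]) linarith+
      ultimately show ?thesis
        using lo_I(3) hi_I(3) by linarith
    qed
    show "Max I = N \<or> m (Max I) < m (Max I + 1)"
    proof (cases "Max I = N")
      case False
      then have "Max I + 1 \<le> N"
        using hi_I(2) by linarith
      moreover have "Max I + 1 \<notin> I"
        using hi(3)[of "Max I + 1"] by linarith
      ultimately have "m (Max I + 1) \<noteq> m s"
        by (simp add: I_def)
      moreover have "m (Max I) \<le> m (Max I + 1)"
        using hi_I(1) \<open>Max I + 1 \<le> N\<close> by (intro nondecrD[OF mono]) linarith+
      ultimately show ?thesis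
        using hi_I(3) by linarith
    qed simp
    assume "1 \<le> Min I - 1"
    moreover have "Min I - 1 \<notin> I"
      using lo(3)[of "Min I - 1"] \<open>1 \<le> Min I - 1\<close> by linarith
    ultimately have "m (Min I - 1) \<noteq> m s"
      using lo_I(2) by (simp add: I_def)
    moreover have "m (Min I - 1) \<le> m (Min I)"
      using \<open>1 \<le> Min I - 1\<close> lo_I(2) by (intro nondecrD[OF mono]) linarith+
    ultimately show "m (Min I - 1) < m (Min I - 1 + 1)"
      using lo_I(3) \<open>1 \<le> Min I - 1\<close> by simp
  qed
qed

lemma blockavg_prefix_constant_run:
  fixes m :: "nat \<Rightarrow> real"
  assumes "lo \<le> r" "1 \<le> r" and run: "\<And>q. lo < q \<Longrightarrow> q \<le> r \<Longrightarrow> m q = v"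
  shows "blockavg m 1 r = v - (real lo * v - (\<Sum>q=1..lo. m q)) / real r"
proof -
  have "(\<Sum>q=1..r. m q) = (\<Sum>q=1..lo. m q) + (\<Sum>q=lo+1..r. m q)"
    using assms(1) sum.ub_add_nat[of 1 lo m "r - lo"] by simp
  also have "(\<Sum>q=lo+1..r. m q) = real (r - lo) * v"
    using run by simp
  finally show ?thesis
    using assms(1,2) by (simp add: blockavg_def field_simps)
qed

lemma exists_block_end_penalized_avg_le:
  fixes m :: "nat \<Rightarrow> real"
  assumes C: "0 \<le> C" and mono: "nondecr N m" and s: "1 \<le> s" "s \<le> N"
  shows "\<exists>s0\<in>{1..N}. (s0 = N \<or> m s0 < m (s0 + 1)) \<and>
           blockavg m 1 s0 + C / sqrt (real s0) \<le> blockavg m 1 s + C / sqrt (real s)"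
proof -
  obtain lo hi where run: "lo < s" "s \<le> hi" "hi \<le> N" "\<And>r. lo < r \<Longrightarrow> r \<le> hi \<Longrightarrow> m r = m s"
    and hi_end: "hi = N \<or> m hi < m (hi + 1)" and lo_end: "1 \<le> lo \<Longrightarrow> m lo < m (lo + 1)"
    using nondecr_maximal_constant_run[OF mono s] by blast
  define D where "D = real lo * m s - (\<Sum>q=1..lo. m q)"
  have "(\<Sum>q=1..lo. m q) \<le> (\<Sum>q=1..lo. m s)"
    using run(1) s(2) by (intro sum_mono nondecrD[OF mono]) auto
  then have "0 \<le> D"
    by (simp add: D_def)
  define g where "g r = blockavg m 1 r + C / sqrt (real r)" for r
  have g: "g r = m s - D / real r + C / sqrt (real r)" if "lo \<le> r" "r \<le> hi" "1 \<le> r" for r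
    unfolding g_def D_def using that by (subst blockavg_prefix_constant_run) (auto intro: run(4))
  have "\<exists>s0\<in>{lo, hi}. 1 \<le> s0 \<and> g s0 \<le> g s"
  proof (cases "lo = 0")
    case True
    have "C / sqrt (real hi) \<le> C / sqrt (real s)"
      using C s run(2) by (intro divide_left_mono) auto
    then have "g hi \<le> g s"
      using True g[of hi] g[of s] run(1-3) s by (simp add: D_def)
    then show ?thesis
      using run(2) s by auto
  next
    case False
    then have "min (g lo) (g hi) \<le> g s"
      using penalized_avg_min_at_run_ends[OF \<open>0 \<le> D\<close>, of lo s hi] g[of hi] g[of s] g[of lo] run(1-3) s
      by simp
    then show ?thesis
      using False run(1,2) s by (auto simp: min_def split: if_splits)
  qed
  then obtain s0 where "s0 \<in> {lo, hi}" "1 \<le> s0" "g s0 \<le> g s"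
    by blast
  moreover have "s0 = N \<or> m s0 < m (s0 + 1)"
    using \<open>s0 \<in> {lo, hi}\<close> \<open>1 \<le> s0\<close> hi_end lo_end by auto
  ultimately show ?thesis
    using run(1-3) s unfolding g_def by auto
qed

lemma blockavg_uminus: "blockavg (\<lambda>r. - f r) a b = - blockavg f a b"
  by (simp add: blockavg_def sum_negf)

lemma blockavg_shift: "blockavg (\<lambda>r. f (r + c)) a b = blockavg f (a + c) (b + c)"
  by (simp add: blockavg_def sum.shift_bounds_cl_nat_ivl)

lemma blockavg_reflect:
  assumes "a \<le> b" "b \<le> c"
  shows "blockavg (\<lambda>r. f (c - r)) a b = blockavg f (c - b) (c - a)"
proof -
  have "(\<Sum>r=a..b. f (c - r)) = (\<Sum>l=c-b..c-a. f l)"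
    using assms by (intro sum.reindex_bij_witness[where i = "\<lambda>l. c - l" and j = "\<lambda>r. c - r"]) auto
  then show ?thesis
    using assms by (simp add: blockavg_def)
qed

lemma iso_reg_exists_block_start_penalized_avg_ge:
  assumes iso: "is_iso_reg n Y m" and C: "0 \<le> C" and jk: "1 \<le> j" "j \<le> k" "k \<le> n"
  shows "\<exists>j0\<in>{1..k}. blockavg m j k - C / sqrt (real (k - j + 1))
                      \<le> blockavg Y j0 k - C / sqrt (real (k - j0 + 1))"
proof -
  have mono: "nondecr n m"
    using iso unfolding is_iso_reg_def by blast
  define w where "w r = - m (k + 1 - r)" for r
  have "nondecr k w"
    unfolding nondecr_def w_def using jk by (auto intro: nondecrD[OF mono])
  have avg: "blockavg w 1 (k - i + 1) = - blockavg m i k" if "1 \<le> i" "i \<le> k" for i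
    using blockavg_reflect[of 1 "k - i + 1" "k + 1" m] that unfolding w_def blockavg_uminus by simp
  obtain s0 where s0: "s0 \<in> {1..k}" "s0 = k \<or> w s0 < w (s0 + 1)"
    and le: "blockavg w 1 s0 + C / sqrt (real s0)
               \<le> blockavg w 1 (k - j + 1) + C / sqrt (real (k - j + 1))"
    using exists_block_end_penalized_avg_le[OF C \<open>nondecr k w\<close>, of "k - j + 1"] jk by fastforce
  define j0 where "j0 = k + 1 - s0"
  have j0: "1 \<le> j0" "j0 \<le> k" "k - j0 + 1 = s0"
    using s0(1) by (auto simp: j0_def)
  have "j0 = 1 \<or> m (j0 - 1) < m j0"
    using s0 by (auto simp: j0_def w_def Suc_diff_le)
  then have "blockavg m j0 k \<le> blockavg Y j0 k"
    using j0 jk by (intro iso_reg_blockavg_le_from_block_start[OF iso]) auto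
  moreover have "blockavg m j k - C / sqrt (real (k - j + 1)) \<le> blockavg m j0 k - C / sqrt (real (k - j0 + 1))"
    using le avg[of j0] avg[of j] jk j0 by simp
  ultimately show ?thesis
    using j0 by (intro bexI[of _ j0]) auto
qed

lemma iso_reg_exists_block_end_penalized_avg_le:
  assumes iso: "is_iso_reg n Y m" and C: "0 \<le> C" and jk: "1 \<le> j" "j \<le> k" "k \<le> n"
  shows "\<exists>k0\<in>{j..n}. blockavg Y j k0 + C / sqrt (real (k0 - j + 1))
                      \<le> blockavg m j k + C / sqrt (real (k - j + 1))"
proof -
  have mono: "nondecr n m"
    using iso unfolding is_iso_reg_def by blast
  define w where "w r = m (r + (j - 1))" for r
  have "nondecr (n - (j - 1)) w"
    unfolding nondecr_def w_def using jk by (auto intro: nondecrD[OF mono])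
  have avg: "blockavg w 1 (i - j + 1) = blockavg m j i" if "j \<le> i" for i
    using that jk unfolding w_def blockavg_shift by simp
  obtain s0 where s0: "s0 \<in> {1..n - (j - 1)}" "s0 = n - (j - 1) \<or> w s0 < w (s0 + 1)"
    and le: "blockavg w 1 s0 + C / sqrt (real s0)
               \<le> blockavg w 1 (k - j + 1) + C / sqrt (real (k - j + 1))"
    using exists_block_end_penalized_avg_le[OF C \<open>nondecr (n - (j - 1)) w\<close>, of "k - j + 1"] jk
    by fastforce
  define k0 where "k0 = s0 + (j - 1)"
  have k0: "j \<le> k0" "k0 \<le> n" "k0 - j + 1 = s0"
    using s0(1) jk by (auto simp: k0_def)
  have "k0 = n \<or> m k0 < m (k0 + 1)"
    using s0 jk by (auto simp: k0_def w_def)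
  then have "blockavg Y j k0 \<le> blockavg m j k0"
    using k0 jk by (intro iso_reg_blockavg_ge_to_block_end[OF iso]) auto
  moreover have "blockavg m j k0 + C / sqrt (real (k0 - j + 1)) \<le> blockavg m j k + C / sqrt (real (k - j + 1))"
    using le avg[of k0] avg[of k] jk k0 by simp
  ultimately show ?thesis
    using k0 by (intro bexI[of _ k0]) auto
qed

lemma finite_Jfull: "finite (Jfull n)"
  by (rule finite_subset[of _ "{1..n} \<times> {1..n}"]) (auto simp: Jfull_def)

lemma iso_reg_SUP_penalized_blockavg_le:
  assumes iso: "is_iso_reg n Y m" and C: "0 \<le> C" "c \<le> C"
    and nonempty: "{(j, k) \<in> Jfull n. P k} \<noteq> {}"
  shows "(SUP (j, k) \<in> {(j, k) \<in> Jfull n. P k}. blockavg m j k - C / sqrt (real (k - j + 1)))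
       \<le> (SUP (j, k) \<in> {(j, k) \<in> Jfull n. P k}. blockavg Y j k - c / sqrt (real (k - j + 1)))"
proof (rule cSUP_mono[OF nonempty])
  show "bdd_above ((\<lambda>(j, k). blockavg Y j k - c / sqrt (real (k - j + 1))) ` {(j, k) \<in> Jfull n. P k})"
    by (intro bdd_above_finite finite_imageI finite_subset[OF _ finite_Jfull]) auto
  fix p assume "p \<in> {(j, k) \<in> Jfull n. P k}"
  then obtain j k where p: "p = (j, k)" "1 \<le> j" "j \<le> k" "k \<le> n" "P k"
    by (auto simp: Jfull_def)
  then obtain j0 where j0: "j0 \<in> {1..k}" and le: "blockavg m j k - C / sqrt (real (k - j + 1))
      \<le> blockavg Y j0 k - C / sqrt (real (k - j0 + 1))"
    using iso_reg_exists_block_start_penalized_avg_ge[OF iso C(1)] by blast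
  have "C / sqrt (real (k - j0 + 1)) \<ge> c / sqrt (real (k - j0 + 1))"
    using C(2) by (simp add: divide_right_mono)
  then show "\<exists>q \<in> {(j, k) \<in> Jfull n. P k}. (\<lambda>(j, k). blockavg m j k - C / sqrt (real (k - j + 1))) p
      \<le> (\<lambda>(j, k). blockavg Y j k - c / sqrt (real (k - j + 1))) q"
    using p j0 le by (intro bexI[of _ "(j0, k)"]) (auto simp: Jfull_def)
qed

lemma iso_reg_INF_penalized_blockavg_le:
  assumes iso: "is_iso_reg n Y m" and C: "0 \<le> C" "- C \<le> c"
    and nonempty: "{(j, k) \<in> Jfull n. P j} \<noteq> {}"
  shows "(INF (j, k) \<in> {(j, k) \<in> Jfull n. P j}. blockavg Y j k - c / sqrt (real (k - j + 1)))
       \<le> (INF (j, k) \<in> {(j, k) \<in> Jfull n. P j}. blockavg m j k + C / sqrt (real (k - j + 1)))"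
proof (rule cINF_mono[OF nonempty])
  show "bdd_below ((\<lambda>(j, k). blockavg Y j k - c / sqrt (real (k - j + 1))) ` {(j, k) \<in> Jfull n. P j})"
    by (intro bdd_below_finite finite_imageI finite_subset[OF _ finite_Jfull]) auto
  fix p assume "p \<in> {(j, k) \<in> Jfull n. P j}"
  then obtain j k where p: "p = (j, k)" "1 \<le> j" "j \<le> k" "k \<le> n" "P j"
    by (auto simp: Jfull_def)
  then obtain k0 where k0: "k0 \<in> {j..n}" and le: "blockavg Y j k0 + C / sqrt (real (k0 - j + 1))
      \<le> blockavg m j k + C / sqrt (real (k - j + 1))"
    using iso_reg_exists_block_end_penalized_avg_le[OF iso C(1)] by blast
  have "- c \<le> C"
    using C(2) by linarith
  then have "- c / sqrt (real (k0 - j + 1)) \<le> C / sqrt (real (k0 - j + 1))"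
    by (rule divide_right_mono) simp
  then show "\<exists>q \<in> {(j, k) \<in> Jfull n. P j}. (\<lambda>(j, k). blockavg Y j k - c / sqrt (real (k - j + 1))) q
      \<le> (\<lambda>(j, k). blockavg m j k + C / sqrt (real (k - j + 1))) p"
    using p k0 le by (intro bexI[of _ "(j, k0)"]) (auto simp: Jfull_def)
qed

theorem theorem5p4:
  fixes n :: nat and Y mu muIso :: "nat \<Rightarrow> real" and sigma alpha :: real
  assumes sigma_pos: "sigma > 0"
    and alpha: "0 < alpha" "alpha < 1"
    and mono_mu: "nondecr n mu"
    and iso: "is_iso_reg n Y muIso"
  defines "delta \<equiv> alpha / (2 * real (card (Jfull n)))"
  defines "L \<equiv> \<lambda>i. (SUP (j,k) \<in> {(j,k) \<in> Jfull n. mu i \<ge> mu k}.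
              blockavg Y j k - sigma * std_normal_quantile (1 - delta) / sqrt (real (k - j + 1)))"
  defines "U \<equiv> \<lambda>i. (INF (j,k) \<in> {(j,k) \<in> Jfull n. mu i \<le> mu j}.
              blockavg Y j k - sigma * std_normal_quantile delta / sqrt (real (k - j + 1)))"
  defines "LYB \<equiv> \<lambda>i. (SUP (j,k) \<in> {(j,k) \<in> Jfull n. mu i \<ge> mu k}.
              blockavg muIso j k - sqrt (2 * sigma^2 * ln (1 / delta)) / sqrt (real (k - j + 1)))"
  defines "UYB \<equiv> \<lambda>i. (INF (j,k) \<in> {(j,k) \<in> Jfull n. mu i \<le> mu j}.
              blockavg muIso j k + sqrt (2 * sigma^2 * ln (1 / delta)) / sqrt (real (k - j + 1)))"
  shows "\<forall>i. 1 \<le> i \<and> i \<le> n \<longrightarrow> L i \<ge> LYB i \<and> U i \<le> UYB i"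
proof (intro allI impI)
  fix i assume i: "1 \<le> i \<and> i \<le> n"
  then have ii: "(i, i) \<in> Jfull n"
    by (simp add: Jfull_def)
  then have "0 < card (Jfull n)"
    using finite_Jfull card_gt_0_iff by blast
  then have delta: "0 < delta" "delta < 1/2"
    using alpha by (auto simp: delta_def field_simps)
  define C where "C = sqrt (2 * sigma^2 * ln (1 / delta))"
  have "C = sigma * sqrt (2 * ln (1 / delta))"
    using sigma_pos by (simp add: C_def real_sqrt_mult)
  then have C: "0 \<le> C" "sigma * std_normal_quantile (1 - delta) \<le> C"
      "- C \<le> sigma * std_normal_quantile delta"
    using mult_left_mono[OF std_normal_quantile_bounds(1)[OF delta], of sigma]
      mult_left_mono[OF std_normal_quantile_bounds(2)[OF delta], of sigma] sigma_pos delta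
    by auto
  have "LYB i \<le> L i"
    unfolding LYB_def L_def C_def[symmetric] using ii C
    by (intro iso_reg_SUP_penalized_blockavg_le[OF iso]) auto
  moreover have "U i \<le> UYB i"
    unfolding U_def UYB_def C_def[symmetric] using ii C
    by (intro iso_reg_INF_penalized_blockavg_le[OF iso]) auto
  ultimately show "L i \<ge> LYB i \<and> U i \<le> UYB i"
    by simp
qed

end
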